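(* Let $p$ be a prime and $m\ge 2$ an integer. Let $W=\langle a_0\rangle\times\langle a_1\rangle\times\cdots\times\langle a_{p-1}\rangle$ be abelian with $a_0$ of order $p^m$ and $a_i$ of order $p^{m-1}$ for $1\le i\le p-1$, and let $\phi:W\to W$ be the map with $\phi(a_i)=a_ia_{i+1}$ for $0\le i\le p-2$ and $\phi(a_{p-1})=a_{p-1}\prod_{j=1}^{p-1}a_j^{-\binom{p}{j}}$. Then $\phi$ is an automorphism of $W$ of order $p$; in particular the semidirect product $W\rtimes\langle b_0\rangle$, with $b_0$ of order $p^{m-1}$ acting via $b_0^{-1}wb_0=\phi(w)$, is well-defined. *)

theory Defs
  imports "HOL-Algebra.Algebra" "HOL-Computational_Algebra.Primes"
begin

text \<open>The abelian group W = <a_0> x <a_1> x ... x <a_(p-1)>, with a_0 of order p^m and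
  a_i of order p^(m-1) for 1 <= i <= p-1, realised as the direct product of the cyclic
  groups Z/p^m and (p-1) copies of Z/p^(m-1) (written additively, but with the
  HOL-Algebra multiplicative notation).\<close>

definition Wgrp :: "nat \<Rightarrow> nat \<Rightarrow> (nat \<Rightarrow> int) monoid" where
  "Wgrp p m = product_group {..<p}
      (\<lambda>i. integer_mod_group (if i = 0 then p ^ m else p ^ (m - 1)))"

definition gen :: "nat \<Rightarrow> nat \<Rightarrow> (nat \<Rightarrow> int)" where
  "gen p i = (\<lambda>j\<in>{..<p}. if j = i then 1 else 0)"

end

theory Submission
  imports Defs "HOL-Computational_Algebra.Polynomial"
begin

text \<open>Write elements of \<open>W\<close> as \<open>\<Prod>\<^sub>i a\<^sub>i ^ x\<^sub>i\<close> and identify the exponent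
  vector \<open>x\<close> with the integer polynomial \<open>\<Sum>\<^sub>i\<^sub><\<^sub>p x\<^sub>i t ^ i\<close>. On exponent vectors
  \<open>\<phi>\<close> is multiplication by \<open>1 + t\<close> modulo \<open>(1 + t) ^ p - 1\<close>: the formula for
  \<open>\<phi> a\<^sub>p\<^sub>-\<^sub>1\<close> is \<open>t ^ (p - 1) + t ^ p\<close> with \<open>t ^ p\<close> reduced to
  \<open>- \<Sum>\<^sub>0\<^sub><\<^sub>j\<^sub><\<^sub>p (p choose j) t ^ j\<close>. As \<open>(1 + t) ^ p\<close> is congruent to \<open>1\<close>, the
  integer lift of \<open>\<phi>\<close> satisfies \<open>\<phi> ^ p = 1\<close> exactly. The lift descends to \<open>W\<close>
  because its coordinate \<open>0\<close> is just \<open>x\<^sub>0\<close>, while all other coordinates are only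
  needed modulo \<open>p ^ (m - 1)\<close>, which divides the order of every generator. So \<open>\<phi>\<close>
  is an endomorphism with \<open>\<phi> ^ p = 1\<close>, hence an automorphism; it is not the identity
  since \<open>\<phi> a\<^sub>0 = a\<^sub>0 a\<^sub>1\<close>, so its order is the prime \<open>p\<close>, which divides
  \<open>p ^ (m - 1)\<close>. As the \<open>a\<^sub>i\<close> generate \<open>W\<close>, every homomorphism with the prescribed
  values on them coincides with \<open>\<phi>\<close>.\<close>

lemma comm_group_product_group:
  assumes "\<And>i. i \<in> I \<Longrightarrow> comm_group (G i)"
  shows "comm_group (product_group I G)"
proof -
  interpret group "product_group I G"
    using assms by (simp add: comm_group.axioms(2))
  show ?thesis
    by (rule group_comm_groupI)
      (auto simp: PiE_iff intro!: restrict_ext comm_monoid.m_comm[OF comm_group.axioms(1)[OF assms]])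
qed

lemma hom_finprod_comm_group:
  assumes "comm_group G" "comm_group H" "h \<in> hom G H" "f \<in> A \<rightarrow> carrier G"
  shows "h (finprod G f A) = finprod H (\<lambda>a. h (f a)) A"
proof -
  interpret G: comm_group G by fact
  interpret H: comm_group H by fact
  interpret group_hom G H h
    using assms(3) by (simp add: group_hom_def group_hom_axioms_def G.is_group H.is_group)
  show ?thesis
  proof (cases "finite A")
    case True
    then show ?thesis
      using assms(4)
    proof (induction A rule: finite_induct)
      case (insert a A)
      then have "f a \<in> carrier G" "f \<in> A \<rightarrow> carrier G"
        "h (f a) \<in> carrier H" "(\<lambda>a. h (f a)) \<in> A \<rightarrow> carrier H"
        by (auto intro: hom_closed)
      with insert show ?case by simp
    qed simp
  qed simp
qed

lemma hom_product_group_apply: "i \<in> I \<Longrightarrow> (\<lambda>x. x i) \<in> hom (product_group I G) (G i)"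
  by (auto simp: hom_def PiE_iff)

lemma int_pow_product_group_apply:
  assumes "\<And>i. i \<in> I \<Longrightarrow> group (G i)" "x \<in> carrier (product_group I G)" "i \<in> I"
  shows "(x [^]\<^bsub>product_group I G\<^esub> (k::int)) i = x i [^]\<^bsub>G i\<^esub> k"
  using hom_int_pow[OF hom_product_group_apply[OF assms(3)] assms(2)] assms by simp

lemma finprod_product_group_apply:
  assumes "\<And>i. i \<in> I \<Longrightarrow> comm_group (G i)" "f \<in> A \<rightarrow> carrier (product_group I G)" "i \<in> I"
  shows "finprod (product_group I G) f A i = finprod (G i) (\<lambda>a. f a i) A"
  using hom_finprod_comm_group[OF comm_group_product_group assms(1)[OF assms(3)]
      hom_product_group_apply[OF assms(3)] assms(2)] assms(1)
  by simp

lemma finprod_integer_mod_group: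
  assumes "f \<in> A \<rightarrow> carrier (integer_mod_group n)"
  shows "finprod (integer_mod_group n) f A = (\<Sum>a\<in>A. f a) mod int n"
proof -
  interpret comm_group "integer_mod_group n" by simp
  show ?thesis
  proof (cases "finite A")
    case True
    then show ?thesis
      using assms
    proof (induction A rule: finite_induct)
      case (insert a A)
      then have "f a \<in> carrier (integer_mod_group n)" "f \<in> A \<rightarrow> carrier (integer_mod_group n)"
        by auto
      with insert show ?case by (simp add: mod_add_right_eq)
    qed simp
  qed simp
qed

lemma restrict_in_auto_if_funpow_eq_id:
  assumes "group G" "f \<in> hom G G" "0 < n" "\<And>x. x \<in> carrier G \<Longrightarrow> (f ^^ n) x = x"
  shows "restrict f (carrier G) \<in> auto G"
proof -
  obtain k where k: "n = Suc k"
    using assms(3) gr0_implies_Suc by blast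
  have f_closed: "f ` carrier G \<subseteq> carrier G"
    using assms(2) by (auto simp: hom_def)
  then have funpow_closed: "(f ^^ j) ` carrier G \<subseteq> carrier G" for j
    by (induction j) auto
  have "\<forall>x\<in>carrier G. (f ^^ k) (f x) = x"
    using assms(4)[unfolded k funpow_Suc_right comp_apply] by blast
  moreover have "\<forall>x\<in>carrier G. f ((f ^^ k) x) = x"
    using assms(4)[unfolded k funpow.simps(2) comp_apply] by blast
  ultimately have "bij_betw f (carrier G) (carrier G)"
    using f_closed funpow_closed by (rule bij_betw_byWitness)
  moreover have "restrict f (carrier G) \<in> hom G G"
    using assms(2) by (rule group.hom_restrict[OF assms(1)]) simp
  ultimately show ?thesis
    by (simp add: auto_def Bij_def)
qed

lemma AutoGroup_nat_pow:
  assumes "group G" "restrict f (carrier G) \<in> auto G"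
  shows "restrict f (carrier G) [^]\<^bsub>AutoGroup G\<^esub> k = restrict (f ^^ k) (carrier G)"
proof -
  interpret AG: group "AutoGroup G"
    by (rule group.AutoGroup[OF assms(1)])
  have f_AG: "restrict f (carrier G) \<in> carrier (AutoGroup G)"
    using assms(2) by (simp add: AutoGroup_def)
  have f_closed: "f x \<in> carrier G" if "x \<in> carrier G" for x
    using assms(2) that by (auto simp: auto_def hom_def Pi_iff)
  have mult_AG: "a \<otimes>\<^bsub>AutoGroup G\<^esub> b = compose (carrier G) a b"
    if "a \<in> carrier (AutoGroup G)" "b \<in> carrier (AutoGroup G)" for a b
    using that by (simp add: AutoGroup_def BijGroup_def auto_def)
  show ?thesis
  proof (induction k)
    case 0
    have "restrict f (carrier G) [^]\<^bsub>AutoGroup G\<^esub> (0::nat) = \<one>\<^bsub>AutoGroup G\<^esub>"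
      by (rule AG.nat_pow_0)
    then show ?case
      by (simp add: AutoGroup_def BijGroup_def)
  next
    case (Suc k)
    have "restrict f (carrier G) [^]\<^bsub>AutoGroup G\<^esub> Suc k
        = restrict f (carrier G) [^]\<^bsub>AutoGroup G\<^esub> k \<otimes>\<^bsub>AutoGroup G\<^esub> restrict f (carrier G)"
      by (rule AG.nat_pow_Suc)
    also have "\<dots> = compose (carrier G) (restrict f (carrier G) [^]\<^bsub>AutoGroup G\<^esub> k)
        (restrict f (carrier G))"
      by (rule mult_AG[OF AG.nat_pow_closed[OF f_AG] f_AG])
    also have "\<dots> = restrict (f ^^ Suc k) (carrier G)"
      unfolding Suc.IH compose_def using f_closed
      by (intro restrict_ext) (simp add: funpow_Suc_right del: funpow.simps)
    finally show ?case .
  qed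
qed

lemma (in group) ord_eq_prime:
  assumes "x \<in> carrier G" "Factorial_Ring.prime p" "x [^] p = \<one>" "x \<noteq> \<one>"
  shows "ord x = p"
proof -
  have "ord x dvd p" "ord x \<noteq> 1"
    using assms pow_eq_id ord_eq_1 by auto
  then show ?thesis
    using assms(2) by (auto simp: prime_nat_iff)
qed

definition vec_poly :: "nat \<Rightarrow> (nat \<Rightarrow> int) \<Rightarrow> int poly" where
  "vec_poly p x = (\<Sum>i<p. monom (x i) i)"

lemma coeff_vec_poly: "coeff (vec_poly p x) j = (if j < p then x j else 0)"
  by (simp add: vec_poly_def coeff_sum coeff_monom)

lemma degree_vec_poly_less: "0 < p \<Longrightarrow> degree (vec_poly p x) < p"
  using degree_le[of "p - 1" "vec_poly p x"] by (force simp: coeff_vec_poly)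

definition relation_poly :: "nat \<Rightarrow> int poly" where
  "relation_poly p = [:1, 1:] ^ p - 1"

lemma coeff_relation_poly:
  "coeff (relation_poly p) j = (if 1 \<le> j \<and> j \<le> p then int (p choose j) else 0)"
proof (cases "j \<le> p")
  case True
  then show ?thesis
    by (cases "j = 0") (simp_all add: relation_poly_def coeff_linear_poly_power coeff_1)
next
  case False
  then show ?thesis
    by (simp add: relation_poly_def coeff_eq_0 degree_linear_power coeff_1)
qed

lemma degree_relation_poly: "0 < p \<Longrightarrow> degree (relation_poly p) = p"
  using degree_le[of p "relation_poly p"] le_degree[of "relation_poly p" p]
  by (force simp: coeff_relation_poly)

text \<open>The exponent vector of \<open>\<phi> (\<Prod>\<^sub>i a\<^sub>i ^ x\<^sub>i)\<close>, computed over the integers.\<close>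

definition phi_lift :: "nat \<Rightarrow> (nat \<Rightarrow> int) \<Rightarrow> nat \<Rightarrow> int" where
  "phi_lift p x j = (if j = 0 then x 0 else x j + x (j - 1) - int (p choose j) * x (p - 1))"

lemma vec_poly_phi_lift:
  assumes "0 < p"
  shows "vec_poly p (phi_lift p x) = [:1, 1:] * vec_poly p x - smult (x (p - 1)) (relation_poly p)"
proof (rule poly_eqI)
  fix j
  show "coeff (vec_poly p (phi_lift p x)) j
      = coeff ([:1, 1:] * vec_poly p x - smult (x (p - 1)) (relation_poly p)) j"
  proof (cases j)
    case 0
    then show ?thesis
      using assms by (simp add: coeff_vec_poly coeff_relation_poly phi_lift_def)
  next
    case (Suc i)
    consider "Suc i < p" | "Suc i = p" | "p < Suc i" by linarith
    then show ?thesis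
      using assms Suc
      by cases (auto simp: coeff_vec_poly coeff_relation_poly phi_lift_def)
  qed
qed

lemma relation_poly_dvd_vec_poly_phi_lift_funpow:
  assumes "0 < p"
  shows "relation_poly p dvd vec_poly p ((phi_lift p ^^ k) x) - [:1, 1:] ^ k * vec_poly p x"
proof (induction k)
  case (Suc k)
  let ?y = "(phi_lift p ^^ k) x"
  have "vec_poly p ((phi_lift p ^^ Suc k) x) - [:1, 1:] ^ Suc k * vec_poly p x
      = [:1, 1:] * (vec_poly p ?y - [:1, 1:] ^ k * vec_poly p x) - [:?y (p - 1):] * relation_poly p"
    using vec_poly_phi_lift[OF assms] by (simp add: algebra_simps)
  then show ?case
    by (simp only:) (rule dvd_diff[OF dvd_mult[OF Suc.IH] dvd_triv_right])
qed simp

lemma phi_lift_funpow_p: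
  assumes "0 < p" "j < p"
  shows "(phi_lift p ^^ p) x j = x j"
proof -
  let ?d = "vec_poly p ((phi_lift p ^^ p) x) - vec_poly p x"
  have "?d = (vec_poly p ((phi_lift p ^^ p) x) - [:1, 1:] ^ p * vec_poly p x)
      + relation_poly p * vec_poly p x"
    by (simp add: relation_poly_def algebra_simps)
  then have dvd: "relation_poly p dvd ?d"
    by (simp only:)
      (rule dvd_add[OF relation_poly_dvd_vec_poly_phi_lift_funpow[OF assms(1)] dvd_triv_left])
  have "degree ?d \<le> max (degree (vec_poly p ((phi_lift p ^^ p) x))) (degree (vec_poly p x))"
    by (rule degree_diff_le_max)
  also have "\<dots> < degree (relation_poly p)"
    using degree_vec_poly_less[OF assms(1)] degree_relation_poly[OF assms(1)] by simp
  finally have "?d = 0"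
    using dvd_imp_degree_le[OF dvd] by (meson leD)
  then have "coeff (vec_poly p ((phi_lift p ^^ p) x)) j = coeff (vec_poly p x) j"
    by simp
  then show ?thesis
    using assms(2) by (simp add: coeff_vec_poly)
qed

definition gen_order :: "nat \<Rightarrow> nat \<Rightarrow> nat \<Rightarrow> nat" where
  "gen_order p m i = (if i = 0 then p ^ m else p ^ (m - 1))"

definition reduce :: "nat \<Rightarrow> nat \<Rightarrow> (nat \<Rightarrow> int) \<Rightarrow> nat \<Rightarrow> int" where
  "reduce p m y = (\<lambda>j\<in>{..<p}. y j mod int (gen_order p m j))"

definition phi :: "nat \<Rightarrow> nat \<Rightarrow> (nat \<Rightarrow> int) \<Rightarrow> nat \<Rightarrow> int" where
  "phi p m x = reduce p m (phi_lift p x)"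

lemma Wgrp_eq: "Wgrp p m = product_group {..<p} (\<lambda>i. integer_mod_group (gen_order p m i))"
  by (simp add: Wgrp_def gen_order_def)

lemma comm_group_Wgrp: "comm_group (Wgrp p m)"
  unfolding Wgrp_eq by (rule comm_group_product_group) simp

lemma group_Wgrp: "group (Wgrp p m)"
  using comm_group_Wgrp by (rule comm_group.axioms(2))

lemma mult_Wgrp: "x \<otimes>\<^bsub>Wgrp p m\<^esub> y = reduce p m (\<lambda>i. x i + y i)"
  by (simp add: Wgrp_eq reduce_def)

lemma int_pow_Wgrp_apply:
  assumes "x \<in> carrier (Wgrp p m)" "j < p"
  shows "(x [^]\<^bsub>Wgrp p m\<^esub> (k::int)) j = (k * x j) mod int (gen_order p m j)"
  using assms int_pow_product_group_apply[of "{..<p}" "\<lambda>i. integer_mod_group (gen_order p m i)"]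
  by (simp add: Wgrp_eq int_pow_integer_mod_group)

lemma finprod_Wgrp_apply:
  assumes "f \<in> A \<rightarrow> carrier (Wgrp p m)" "j < p"
  shows "finprod (Wgrp p m) f A j = (\<Sum>a\<in>A. f a j) mod int (gen_order p m j)"
proof -
  have "finprod (Wgrp p m) f A j = finprod (integer_mod_group (gen_order p m j)) (\<lambda>a. f a j) A"
    using assms finprod_product_group_apply[of "{..<p}" "\<lambda>i. integer_mod_group (gen_order p m i)"]
    by (simp add: Wgrp_eq)
  also have "\<dots> = (\<Sum>a\<in>A. f a j) mod int (gen_order p m j)"
    using assms by (intro finprod_integer_mod_group) (auto simp: Wgrp_eq PiE_iff)
  finally show ?thesis .
qed

locale Wgrp_setting =
  fixes p m :: nat
  assumes two_le_p: "2 \<le> p" and two_le_m: "2 \<le> m"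
begin

abbreviation W where "W \<equiv> Wgrp p m"

lemma gen_order_gt_one: "1 < gen_order p m i"
proof -
  have "1 < p ^ k" if "0 < k" for k
    using that two_le_p by (intro one_less_power) auto
  then show ?thesis
    using two_le_m by (simp add: gen_order_def)
qed

lemma gen_order_pos: "0 < int (gen_order p m i)"
  using gen_order_gt_one[of i] by linarith

lemma carrier_Wgrp: "carrier W = (\<Pi>\<^sub>E i\<in>{..<p}. {0..<int (gen_order p m i)})"
  unfolding Wgrp_eq carrier_product_group carrier_integer_mod_group
  by (intro PiE_cong) (simp add: gen_order_gt_one[THEN gr_implies_not0])

lemma reduce_in_carrier: "reduce p m y \<in> carrier W"
  using gen_order_pos by (auto simp: carrier_Wgrp reduce_def)

lemma reduce_eq_self: "x \<in> carrier W \<Longrightarrow> reduce p m x = x"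
  by (auto simp: carrier_Wgrp reduce_def PiE_iff extensional_def intro!: ext)

lemma gen_apply: "j < p \<Longrightarrow> gen p i j = (if j = i then 1 else 0)"
  by (simp add: gen_def)

lemma gen_in_carrier: "i < p \<Longrightarrow> gen p i \<in> carrier W"
  using gen_order_gt_one gen_order_pos by (auto simp: carrier_Wgrp gen_def)

lemma phi_reduce: "phi p m (reduce p m y) = phi p m y"
proof -
  have "phi_lift p (reduce p m y) j mod int (gen_order p m j)
      = phi_lift p y j mod int (gen_order p m j)" if "j < p" for j
  proof (cases "j = 0")
    case True
    then show ?thesis
      using that by (simp add: phi_lift_def reduce_def)
  next
    case False
    define q where "q = int (p ^ (m - 1))"
    have "q dvd int (gen_order p m i)" for i
      by (auto simp: q_def gen_order_def intro!: le_imp_power_dvd)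
    then have red: "reduce p m y i mod q = y i mod q" if "i < p" for i
      using that by (simp add: reduce_def mod_mod_cancel)
    have "phi_lift p (reduce p m y) j mod q = phi_lift p y j mod q"
      unfolding phi_lift_def using False that two_le_p
      by (auto intro!: mod_diff_cong mod_add_cong mod_mult_cong red)
    then show ?thesis
      using False by (simp add: q_def gen_order_def)
  qed
  then show ?thesis
    by (auto simp: phi_def reduce_def)
qed

lemma phi_in_carrier: "phi p m x \<in> carrier W"
  by (simp add: phi_def reduce_in_carrier)

lemma phi_in_hom: "phi p m \<in> hom W W"
proof (rule homI)
  fix x y
  have "phi_lift p (\<lambda>i. x i + y i) = (\<lambda>j. phi_lift p x j + phi_lift p y j)"
    by (simp add: phi_lift_def fun_eq_iff algebra_simps)
  then have "phi p m (\<lambda>i. x i + y i) = phi p m x \<otimes>\<^bsub>W\<^esub> phi p m y"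
    by (auto simp: phi_def mult_Wgrp reduce_def mod_add_eq intro!: restrict_ext)
  then show "phi p m (x \<otimes>\<^bsub>W\<^esub> y) = phi p m x \<otimes>\<^bsub>W\<^esub> phi p m y"
    by (simp add: mult_Wgrp phi_reduce)
qed (rule phi_in_carrier)

lemma phi_funpow_reduce: "(phi p m ^^ k) (reduce p m y) = reduce p m ((phi_lift p ^^ k) y)"
proof (induction k)
  case (Suc k)
  then show ?case by (simp add: phi_reduce) (simp add: phi_def)
qed simp

lemma phi_funpow_p:
  assumes "x \<in> carrier W"
  shows "(phi p m ^^ p) x = x"
proof -
  have "(phi p m ^^ p) x = (phi p m ^^ p) (reduce p m x)"
    by (simp only: reduce_eq_self[OF assms])
  also have "\<dots> = reduce p m ((phi_lift p ^^ p) x)"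
    by (rule phi_funpow_reduce)
  also have "\<dots> = reduce p m x"
    unfolding reduce_def using two_le_p by (intro restrict_ext) (simp add: phi_lift_funpow_p)
  also have "\<dots> = x"
    by (rule reduce_eq_self[OF assms])
  finally show ?thesis .
qed

lemma phi_gen:
  assumes "i + 2 \<le> p"
  shows "phi p m (gen p i) = gen p i \<otimes>\<^bsub>W\<^esub> gen p (Suc i)"
  unfolding phi_def mult_Wgrp reduce_def
proof (intro restrict_ext)
  fix j
  assume "j \<in> {..<p}"
  then show "phi_lift p (gen p i) j mod int (gen_order p m j)
      = (gen p i j + gen p (Suc i) j) mod int (gen_order p m j)"
    using assms by (auto simp: phi_lift_def gen_apply)
qed

lemma phi_gen_last:
  "phi p m (gen p (p - 1)) = gen p (p - 1) \<otimes>\<^bsub>W\<^esub>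
     finprod W (\<lambda>j. gen p j [^]\<^bsub>W\<^esub> (- int (p choose j))) {1..p - 1}"
proof -
  have fin: "finprod W (\<lambda>j. gen p j [^]\<^bsub>W\<^esub> (- int (p choose j))) {1..p - 1} k
      = (if 1 \<le> k then - int (p choose k) else 0) mod int (gen_order p m k)" if "k < p" for k
  proof -
    interpret comm_group W by (rule comm_group_Wgrp)
    have "(\<lambda>j. gen p j [^]\<^bsub>W\<^esub> (- int (p choose j))) \<in> {1..p - 1} \<rightarrow> carrier W"
      using gen_in_carrier by auto
    moreover have "(\<Sum>j\<in>{1..p - 1}. (gen p j [^]\<^bsub>W\<^esub> (- int (p choose j))) k)
        = (\<Sum>j\<in>{1..p - 1}. (- int (p choose j) * gen p j k) mod int (gen_order p m k))"
      using that two_le_p by (intro sum.cong) (auto simp: int_pow_Wgrp_apply gen_in_carrier)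
    ultimately have "finprod W (\<lambda>j. gen p j [^]\<^bsub>W\<^esub> (- int (p choose j))) {1..p - 1} k
        = (\<Sum>j\<in>{1..p - 1}. - int (p choose j) * gen p j k) mod int (gen_order p m k)"
      using that by (simp add: finprod_Wgrp_apply mod_sum_eq)
    also have "\<dots> = (if 1 \<le> k then - int (p choose k) else 0) mod int (gen_order p m k)"
      using that by (simp add: gen_apply if_distrib cong: if_cong)
    finally show ?thesis .
  qed
  show ?thesis
    unfolding phi_def mult_Wgrp reduce_def
  proof (intro restrict_ext)
    fix k
    assume k: "k \<in> {..<p}"
    then show "phi_lift p (gen p (p - 1)) k mod int (gen_order p m k)
        = (gen p (p - 1) k + finprod W (\<lambda>j. gen p j [^]\<^bsub>W\<^esub> (- int (p choose j))) {1..p - 1} k)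
          mod int (gen_order p m k)"
      using two_le_p fin[of k] by (auto simp: phi_lift_def gen_apply mod_add_right_eq)
  qed
qed

lemma Wgrp_decomposition:
  assumes "x \<in> carrier W"
  shows "finprod W (\<lambda>i. gen p i [^]\<^bsub>W\<^esub> x i) {..<p} = x"
proof (rule extensionalityI[of _ "{..<p}"])
  interpret comm_group W by (rule comm_group_Wgrp)
  have F: "(\<lambda>i. gen p i [^]\<^bsub>W\<^esub> x i) \<in> {..<p} \<rightarrow> carrier W"
    using gen_in_carrier by auto
  then show "finprod W (\<lambda>i. gen p i [^]\<^bsub>W\<^esub> x i) {..<p} \<in> extensional {..<p}"
    using finprod_closed[OF F] by (simp add: carrier_Wgrp PiE_def)
  show "x \<in> extensional {..<p}"
    using assms by (simp add: carrier_Wgrp PiE_def)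
  fix j
  assume j: "j \<in> {..<p}"
  have "finprod W (\<lambda>i. gen p i [^]\<^bsub>W\<^esub> x i) {..<p} j
      = (\<Sum>i<p. x i * gen p i j) mod int (gen_order p m j)"
    using j F by (simp add: finprod_Wgrp_apply int_pow_Wgrp_apply gen_in_carrier mod_sum_eq)
  also have "\<dots> = x j mod int (gen_order p m j)"
    using j by (simp add: gen_apply if_distrib cong: if_cong)
  also have "\<dots> = x j"
    using assms j by (simp add: carrier_Wgrp PiE_iff)
  finally show "finprod W (\<lambda>i. gen p i [^]\<^bsub>W\<^esub> x i) {..<p} j = x j" .
qed

lemma hom_eq_if_eq_on_gen:
  assumes "comm_group H" "\<psi> \<in> hom W H" "\<chi> \<in> hom W H"
    and "\<And>i. i < p \<Longrightarrow> \<psi> (gen p i) = \<chi> (gen p i)" and "x \<in> carrier W"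
  shows "\<psi> x = \<chi> x"
proof -
  interpret H: comm_group H by fact
  have F: "(\<lambda>i. gen p i [^]\<^bsub>W\<^esub> x i) \<in> {..<p} \<rightarrow> carrier W"
    using gen_in_carrier group.int_pow_closed[OF group_Wgrp] by auto
  have decomp: "h x = finprod H (\<lambda>i. h (gen p i [^]\<^bsub>W\<^esub> x i)) {..<p}" if "h \<in> hom W H" for h
    using hom_finprod_comm_group[OF comm_group_Wgrp assms(1) that F] Wgrp_decomposition[OF assms(5)]
    by simp
  have "\<psi> (gen p i [^]\<^bsub>W\<^esub> x i) = \<chi> (gen p i [^]\<^bsub>W\<^esub> x i)" if "i < p" for i
    using hom_int_pow[OF assms(2) gen_in_carrier[OF that] group_Wgrp H.is_group]
      hom_int_pow[OF assms(3) gen_in_carrier[OF that] group_Wgrp H.is_group] assms(4)[OF that]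
    by simp
  moreover have "(\<lambda>i. \<chi> (gen p i [^]\<^bsub>W\<^esub> x i)) \<in> {..<p} \<rightarrow> carrier H"
    using F assms(3) by (auto simp: hom_def)
  ultimately have "finprod H (\<lambda>i. \<psi> (gen p i [^]\<^bsub>W\<^esub> x i)) {..<p}
      = finprod H (\<lambda>i. \<chi> (gen p i [^]\<^bsub>W\<^esub> x i)) {..<p}"
    by (intro H.finprod_cong') auto
  then show ?thesis
    using decomp assms(2,3) by simp
qed

lemma restrict_eq_phi:
  assumes "\<psi> \<in> hom W W"
    and "\<forall>i. i + 2 \<le> p \<longrightarrow> \<psi> (gen p i) = gen p i \<otimes>\<^bsub>W\<^esub> gen p (Suc i)"
    and "\<psi> (gen p (p - 1)) = gen p (p - 1) \<otimes>\<^bsub>W\<^esub>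
           finprod W (\<lambda>j. gen p j [^]\<^bsub>W\<^esub> (- int (p choose j))) {1..p - 1}"
  shows "restrict \<psi> (carrier W) = restrict (phi p m) (carrier W)"
proof (rule restrict_ext)
  have gen_eq: "\<psi> (gen p i) = phi p m (gen p i)" if "i < p" for i
  proof (cases "i + 2 \<le> p")
    case True
    then show ?thesis using assms(2) phi_gen[OF True] by simp
  next
    case False
    then have "i = p - 1" using that by linarith
    then show ?thesis using assms(3) phi_gen_last by (simp only:)
  qed
  show "\<psi> x = phi p m x" if "x \<in> carrier W" for x
    using comm_group_Wgrp assms(1) phi_in_hom gen_eq that by (rule hom_eq_if_eq_on_gen)
qed

lemma phi_in_auto: "restrict (phi p m) (carrier W) \<in> auto W"
  using restrict_in_auto_if_funpow_eq_id[OF group_Wgrp phi_in_hom, of p] phi_funpow_p two_le_p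
  by simp

lemma ord_phi:
  assumes "Factorial_Ring.prime p"
  shows "group.ord (AutoGroup W) (restrict (phi p m) (carrier W)) = p"
proof -
  interpret AG: group "AutoGroup W" by (rule group.AutoGroup[OF group_Wgrp])
  have "restrict (phi p m) (carrier W) [^]\<^bsub>AutoGroup W\<^esub> p = restrict (phi p m ^^ p) (carrier W)"
    by (rule AutoGroup_nat_pow[OF group_Wgrp phi_in_auto])
  also have "\<dots> = (\<lambda>x\<in>carrier W. x)"
    by (intro restrict_ext phi_funpow_p)
  also have "\<dots> = \<one>\<^bsub>AutoGroup W\<^esub>"
    by (simp add: AutoGroup_def BijGroup_def)
  finally have "restrict (phi p m) (carrier W) [^]\<^bsub>AutoGroup W\<^esub> p = \<one>\<^bsub>AutoGroup W\<^esub>" .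
  moreover have "restrict (phi p m) (carrier W) \<noteq> \<one>\<^bsub>AutoGroup W\<^esub>"
  proof
    assume "restrict (phi p m) (carrier W) = \<one>\<^bsub>AutoGroup W\<^esub>"
    then have "restrict (phi p m) (carrier W) (gen p 0) = \<one>\<^bsub>AutoGroup W\<^esub> (gen p 0)"
      by (rule fun_cong)
    then have "phi p m (gen p 0) = gen p 0"
      using gen_in_carrier[of 0] two_le_p by (simp add: AutoGroup_def BijGroup_def)
    moreover have "phi p m (gen p 0) 1 = 1"
      using phi_gen[of 0] two_le_p gen_order_gt_one[of 1] by (simp add: mult_Wgrp reduce_def gen_def)
    ultimately show False
      using two_le_p by (simp add: gen_def)
  qed
  ultimately show ?thesis
    using assms phi_in_auto AG.ord_eq_prime by (simp add: AutoGroup_def)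
qed

end

theorem mainTheorem14:
  fixes p m :: nat
  assumes "Factorial_Ring.prime p" and "m \<ge> 2"
  shows "(\<exists>\<phi>. \<phi> \<in> hom (Wgrp p m) (Wgrp p m)
            \<and> (\<forall>i. i + 2 \<le> p \<longrightarrow>
                   \<phi> (gen p i) = gen p i \<otimes>\<^bsub>Wgrp p m\<^esub> gen p (Suc i))
            \<and> \<phi> (gen p (p - 1)) = gen p (p - 1) \<otimes>\<^bsub>Wgrp p m\<^esub>
                 finprod (Wgrp p m) (\<lambda>j. gen p j [^]\<^bsub>Wgrp p m\<^esub> (- int (p choose j))) {1..p - 1})
       \<and> (\<forall>\<phi>. \<phi> \<in> hom (Wgrp p m) (Wgrp p m)
            \<and> (\<forall>i. i + 2 \<le> p \<longrightarrow>
                   \<phi> (gen p i) = gen p i \<otimes>\<^bsub>Wgrp p m\<^esub> gen p (Suc i))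
            \<and> \<phi> (gen p (p - 1)) = gen p (p - 1) \<otimes>\<^bsub>Wgrp p m\<^esub>
                 finprod (Wgrp p m) (\<lambda>j. gen p j [^]\<^bsub>Wgrp p m\<^esub> (- int (p choose j))) {1..p - 1}
          \<longrightarrow> restrict \<phi> (carrier (Wgrp p m)) \<in> auto (Wgrp p m)
            \<and> group.ord (AutoGroup (Wgrp p m)) (restrict \<phi> (carrier (Wgrp p m))) = p
            \<and> restrict \<phi> (carrier (Wgrp p m)) [^]\<^bsub>AutoGroup (Wgrp p m)\<^esub> (p ^ (m - 1))
                = \<one>\<^bsub>AutoGroup (Wgrp p m)\<^esub>)"
proof -
  interpret Wgrp_setting p m
    using assms prime_ge_2_nat by unfold_locales auto
  interpret AG: group "AutoGroup W"
    by (rule group.AutoGroup[OF group_Wgrp])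
  have ord: "AG.ord (restrict (phi p m) (carrier W)) = p"
    by (rule ord_phi[OF assms(1)])
  have "restrict (phi p m) (carrier W) \<in> carrier (AutoGroup W)"
    using phi_in_auto by (simp add: AutoGroup_def)
  moreover have "p dvd p ^ (m - 1)"
    using assms(2) by (simp add: dvd_power)
  ultimately have pow:
    "restrict (phi p m) (carrier W) [^]\<^bsub>AutoGroup W\<^esub> (p ^ (m - 1)) = \<one>\<^bsub>AutoGroup W\<^esub>"
    by (simp add: AG.pow_eq_id ord)
  show ?thesis
    using phi_in_hom phi_gen phi_gen_last
    by (intro conjI exI[of _ "phi p m"] allI impI)
      (auto simp: phi_in_auto ord pow[unfolded One_nat_def] dest!: restrict_eq_phi)
qed

end
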